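(* Let $(M_1,\alpha_1)$, $(M_2,\alpha_2)$ be Riemannian manifolds of dimensions $n_1,n_2$, $M=M_1\times M_2$, and let $f:[0,\infty)^2\to[0,\infty)$ be smooth (on the complement of the origin) with $f(\lambda s,\lambda t)=\lambda f(s,t)$ for $\lambda>0$ and $f(s,t)\neq0$ for $(s,t)\neq(0,0)$. Define $F(x,y)=\sqrt{f(\alpha_1(x_1,y_1)^2,\alpha_2(x_2,y_2)^2)}$ for $x=(x_1,x_2)$, $y=y_1\oplus y_2\in T_{x_1}M_1\oplus T_{x_2}M_2$. Then the matrix $g_{ij}=\frac12[F^2]_{y^iy^j}$ is positive definite for all $y\neq0$ if and only if, evaluated at $(s,t)=(\alpha_1^2,\alpha_2^2)$, $$f_s>0,\quad f_t>0,\quad f_s+2sf_{ss}>0,\quad f_t+2tf_{tt}>0,\quad f_sf_t-2ff_{st}>0,$$ and in that case $\det(g_{ij})=h(\alpha_1^2,\alpha_2^2)\det(\bar g_{ab})\det(\bar g_{\alpha\beta})$ with $h=(f_s)^{n_1-1}(f_t)^{n_2-1}(f_sf_t-2ff_{st})$, where $\alpha_1^2=\bar g_{ab}y^ay^b$, $\alpha_2^2=\bar g_{\alpha\beta}y^\alpha y^\beta$ in product coordinates.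
   Context: Coordinates $(x^a)$ on $M_1$ and $(x^\alpha)$ on $M_2$ give coordinates $(x^a,x^\alpha)$ on $M$ and $(y^a,y^\alpha)$ on tangent spaces; $\bar g_{ab}$, $\bar g_{\alpha\beta}$ are the components of the Riemannian metrics $\alpha_1,\alpha_2$. *)

theory Defs
  imports "HOL-Analysis.Analysis"
begin

definition pd_s :: "(real \<Rightarrow> real \<Rightarrow> real) \<Rightarrow> real \<Rightarrow> real \<Rightarrow> real" where
  "pd_s f s t = deriv (\<lambda>u. f u t) s"

definition pd_t :: "(real \<Rightarrow> real \<Rightarrow> real) \<Rightarrow> real \<Rightarrow> real \<Rightarrow> real" where
  "pd_t f s t = deriv (\<lambda>u. f s u) t"

fun Ck_on2 :: "nat \<Rightarrow> (real \<times> real) set \<Rightarrow> (real \<Rightarrow> real \<Rightarrow> real) \<Rightarrow> bool" where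
  "Ck_on2 0 U f = continuous_on U (\<lambda>p. f (fst p) (snd p))"
| "Ck_on2 (Suc k) U f =
     (continuous_on U (\<lambda>p. f (fst p) (snd p)) \<and>
      (\<forall>p\<in>U. (\<lambda>u. f u (snd p)) differentiable (at (fst p)) \<and>
              (\<lambda>u. f (fst p) u) differentiable (at (snd p))) \<and>
      Ck_on2 k U (pd_s f) \<and> Ck_on2 k U (pd_t f))"

definition smooth_on2 :: "(real \<times> real) set \<Rightarrow> (real \<Rightarrow> real \<Rightarrow> real) \<Rightarrow> bool" where
  "smooth_on2 U f \<longleftrightarrow> (\<forall>k. Ck_on2 k U f)"

definition punctured_quadrant :: "(real \<times> real) set" where
  "punctured_quadrant = {p. 0 \<le> fst p \<and> 0 \<le> snd p \<and> p \<noteq> (0, 0)}"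

definition pos_def :: "real^'n^'n \<Rightarrow> bool" where
  "pos_def M \<longleftrightarrow> (\<forall>v. v \<noteq> 0 \<longrightarrow> v \<bullet> (M *v v) > 0)"

definition comp1 :: "real^('n1::finite + 'n2::finite) \<Rightarrow> real^'n1" where
  "comp1 y = (\<chi> a. y $ Inl a)"

definition comp2 :: "real^('n1::finite + 'n2::finite) \<Rightarrow> real^'n2" where
  "comp2 y = (\<chi> b. y $ Inr b)"

definition alpha1_sq :: "real^'n1^'n1 \<Rightarrow> real^('n1::finite + 'n2::finite) \<Rightarrow> real" where
  "alpha1_sq A y = comp1 y \<bullet> (A *v comp1 y)"

definition alpha2_sq :: "real^'n2^'n2 \<Rightarrow> real^('n1::finite + 'n2::finite) \<Rightarrow> real" where
  "alpha2_sq B y = comp2 y \<bullet> (B *v comp2 y)"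

definition Fprod :: "real^'n1^'n1 \<Rightarrow> real^'n2^'n2 \<Rightarrow> (real \<Rightarrow> real \<Rightarrow> real)
    \<Rightarrow> real^('n1::finite + 'n2::finite) \<Rightarrow> real" where
  "Fprod A B f y = sqrt (f (alpha1_sq A y) (alpha2_sq B y))"

definition pdy :: "'i \<Rightarrow> (real^'i::finite \<Rightarrow> real) \<Rightarrow> real^'i \<Rightarrow> real" where
  "pdy i \<phi> y = deriv (\<lambda>r. \<phi> (y + r *\<^sub>R axis i 1)) 0"

definition gmat :: "real^'n1^'n1 \<Rightarrow> real^'n2^'n2 \<Rightarrow> (real \<Rightarrow> real \<Rightarrow> real)
    \<Rightarrow> real^('n1::finite + 'n2::finite) \<Rightarrow> real^('n1::finite + 'n2::finite)^('n1::finite + 'n2::finite)" where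
  "gmat A B f y = (\<chi> i j. (1/2) * pdy i (pdy j (\<lambda>z. (Fprod A B f z)^2)) y)"

end

theory Submission
  imports Defs
begin

text \<open>
  With \<open>s = \<alpha>\<^sub>1\<^sup>2\<close>, \<open>t = \<alpha>\<^sub>2\<^sup>2\<close> and \<open>F\<^sup>2 = f(s, t)\<close>, two differentiations give
  \<open>g = f\<^sub>s A \<oplus> f\<^sub>t B + 2 f\<^sub>s\<^sub>s a a\<^sup>T + 2 f\<^sub>s\<^sub>t (a b\<^sup>T + b a\<^sup>T) + 2 f\<^sub>t\<^sub>t b b\<^sup>T\<close>, where \<open>a\<close>, \<open>b\<close> are the
  two components of \<open>y\<close> with lowered indices: a block-diagonal matrix plus a perturbation of rank two.
  The Euler relations of the degree-one homogeneous \<open>f\<close>, namely \<open>f = s f\<^sub>s + t f\<^sub>t\<close>,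
  \<open>s f\<^sub>s\<^sub>s + t f\<^sub>s\<^sub>t = 0\<close> and \<open>s f\<^sub>s\<^sub>t + t f\<^sub>t\<^sub>t = 0\<close>, turn
  \<open>(f\<^sub>s + 2 s f\<^sub>s\<^sub>s)(f\<^sub>t + 2 t f\<^sub>t\<^sub>t) - 4 s t f\<^sub>s\<^sub>t\<^sup>2\<close> into \<open>f\<^sub>s f\<^sub>t - 2 f f\<^sub>s\<^sub>t\<close>; the matrix determinant
  lemma then yields the determinant. For positivity, \<open>g(v, v)\<close> is bounded below via Cauchy--Schwarz
  for \<open>\<alpha>\<^sub>1\<close> and \<open>\<alpha>\<^sub>2\<close> by a binary quadratic form whose discriminant is that expression.
  Conversely, evaluating \<open>g\<close> on the plane spanned by the two components of \<open>y\<close> gives all conditions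
  except \<open>f\<^sub>s > 0\<close> and \<open>f\<^sub>t > 0\<close> in the interior of the quadrant; these follow because
  \<open>\<sqrt>s f\<^sub>s\<close> vanishes at \<open>s = 0\<close> and has derivative \<open>(f\<^sub>s + 2 s f\<^sub>s\<^sub>s) / (2 \<sqrt>s)\<close>.
\<close>

section \<open>Vectors and matrices on a direct sum\<close>

definition vec_inl :: "real^'a \<Rightarrow> real^('a::finite + 'b::finite)" where
  "vec_inl x = (\<chi> i. case i of Inl a \<Rightarrow> x$a | Inr _ \<Rightarrow> 0)"

definition vec_inr :: "real^'b \<Rightarrow> real^('a::finite + 'b::finite)" where
  "vec_inr y = (\<chi> i. case i of Inl _ \<Rightarrow> 0 | Inr b \<Rightarrow> y$b)"

definition block_diag :: "real^'a^'a \<Rightarrow> real^'b^'b \<Rightarrow> real^('a::finite + 'b::finite)^('a + 'b)" where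
  "block_diag X Y = (\<chi> i j. case i of
       Inl a \<Rightarrow> (case j of Inl a' \<Rightarrow> X$a$a' | Inr _ \<Rightarrow> 0)
     | Inr b \<Rightarrow> (case j of Inl _ \<Rightarrow> 0 | Inr b' \<Rightarrow> Y$b$b'))"

lemma sum_UNIV_sum_type:
  "(\<Sum>i\<in>(UNIV::('a::finite + 'b::finite) set). g i) = (\<Sum>a\<in>UNIV. g (Inl a)) + (\<Sum>b\<in>UNIV. g (Inr b))"
  by (subst UNIV_Plus_UNIV[symmetric], subst sum.Plus) (auto simp: comp_def)

lemma prod_UNIV_sum_type:
  "(\<Prod>i\<in>(UNIV::('a::finite + 'b::finite) set). g i) = (\<Prod>a\<in>UNIV. g (Inl a)) * (\<Prod>b\<in>UNIV. g (Inr b))"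
  by (subst UNIV_Plus_UNIV[symmetric], subst prod.Plus) (auto simp: comp_def)

lemma inner_sum_type:
  "(v::real^('a::finite + 'b::finite)) \<bullet> w = comp1 v \<bullet> comp1 w + comp2 v \<bullet> comp2 w"
  by (simp add: inner_vec_def sum_UNIV_sum_type comp1_def comp2_def)

lemma comp1_vec_inl [simp]: "comp1 (vec_inl x :: real^('a::finite + 'b::finite)) = x"
  and comp2_vec_inl [simp]: "comp2 (vec_inl x :: real^('a::finite + 'b::finite)) = 0"
  and comp1_vec_inr [simp]: "comp1 (vec_inr y :: real^('a::finite + 'b::finite)) = 0"
  and comp2_vec_inr [simp]: "comp2 (vec_inr y :: real^('a::finite + 'b::finite)) = y"
  by (auto simp: comp1_def comp2_def vec_inl_def vec_inr_def vec_eq_iff)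

lemma comp1_add [simp]: "comp1 (v + w) = comp1 v + comp1 w"
  and comp2_add [simp]: "comp2 (v + w) = comp2 v + comp2 w"
  and comp1_scaleR [simp]: "comp1 (c *\<^sub>R v) = c *\<^sub>R comp1 v"
  and comp2_scaleR [simp]: "comp2 (c *\<^sub>R v) = c *\<^sub>R comp2 v"
  and comp1_zero [simp]: "comp1 0 = 0"
  and comp2_zero [simp]: "comp2 0 = 0"
  by (auto simp: comp1_def comp2_def vec_eq_iff)

lemma linear_comp1: "linear comp1"
  and linear_comp2: "linear comp2"
  by (auto intro: linearI)

lemma comp1_axis [simp]:
    "comp1 (axis (Inl a) 1 :: real^('a::finite + 'b::finite)) = axis a 1"
    "comp1 (axis (Inr b) 1 :: real^('a::finite + 'b::finite)) = 0"
  and comp2_axis [simp]: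
    "comp2 (axis (Inl a) 1 :: real^('a::finite + 'b::finite)) = 0"
    "comp2 (axis (Inr b) 1 :: real^('a::finite + 'b::finite)) = axis b 1"
  by (auto simp: comp1_def comp2_def axis_def vec_eq_iff)

lemma vec_inl_nth [simp]: "vec_inl x $ Inl a = x $ a" "vec_inl x $ Inr b = 0"
  and vec_inr_nth [simp]: "vec_inr y $ Inl a = 0" "vec_inr y $ Inr b = y $ b"
  by (simp_all add: vec_inl_def vec_inr_def)

lemma vec_inl_comp1_add_vec_inr_comp2: "vec_inl (comp1 v) + vec_inr (comp2 v) = v"
  by (auto simp: comp1_def comp2_def vec_inl_def vec_inr_def vec_eq_iff split: sum.splits)

lemma vec_inl_add_vec_inr_eq_0_iff: "vec_inl x + vec_inr y = 0 \<longleftrightarrow> x = 0 \<and> y = 0"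
  by (metis add.right_neutral comp1_vec_inl comp1_vec_inr comp2_vec_inl comp2_vec_inr
      comp1_add comp2_add comp1_zero comp2_zero vec_inl_comp1_add_vec_inr_comp2)

lemma comp1_eq_0_and_comp2_eq_0_iff: "comp1 v = 0 \<and> comp2 v = 0 \<longleftrightarrow> v = 0"
  by (metis vec_inl_add_vec_inr_eq_0_iff vec_inl_comp1_add_vec_inr_comp2)

lemma vec_inl_scaleR: "vec_inl (c *\<^sub>R x) = c *\<^sub>R (vec_inl x :: real^('a::finite + 'b::finite))"
  and vec_inr_scaleR: "vec_inr (c *\<^sub>R y) = c *\<^sub>R (vec_inr y :: real^('a::finite + 'b::finite))"
  by (auto simp: vec_inl_def vec_inr_def vec_eq_iff split: sum.splits)

lemma vec_inl_zero [simp]: "vec_inl 0 = 0"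
  and vec_inr_zero [simp]: "vec_inr 0 = 0"
  by (simp_all add: vec_inl_def vec_inr_def vec_eq_iff split: sum.split)

lemma vec_inl_eq_0_iff [simp]: "(vec_inl x :: real^('a::finite + 'b::finite)) = 0 \<longleftrightarrow> x = 0"
  and vec_inr_eq_0_iff [simp]: "(vec_inr y :: real^('a::finite + 'b::finite)) = 0 \<longleftrightarrow> y = 0"
  by (metis comp1_vec_inl comp1_zero vec_inl_zero, metis comp2_vec_inr comp2_zero vec_inr_zero)

lemma inner_vec_inl [simp]: "vec_inl x \<bullet> v = x \<bullet> comp1 v" "v \<bullet> vec_inl x = comp1 v \<bullet> x"
  and inner_vec_inr [simp]: "vec_inr y \<bullet> v = y \<bullet> comp2 v" "v \<bullet> vec_inr y = comp2 v \<bullet> y"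
  by (simp_all add: inner_sum_type)

lemma block_diag_mult_vec:
  "block_diag X Y *v v = vec_inl (X *v comp1 v) + vec_inr (Y *v comp2 v)"
  by (auto simp: block_diag_def vec_inl_def vec_inr_def comp1_def comp2_def vec_eq_iff
      matrix_vector_mult_def sum_UNIV_sum_type split: sum.splits)

lemma matrix_vector_mult_axis_nth: "(M *v axis j 1) $ i = M $ i $ j"
  for M :: "real^'n^'m"
  by (metis cart_eq_inner_axis matrix_vector_mul_component)

lemma symmetric_matrix_nth: "transpose A = A \<Longrightarrow> A $ i $ j = A $ j $ i"
  by (metis transpose_def vec_lambda_beta)

lemma symmetric_matrix_inner: "transpose A = A \<Longrightarrow> x \<bullet> (A *v y) = (A *v x) \<bullet> (y::real^'n)"
  by (metis dot_lmul_matrix transpose_matrix_vector)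

lemma pos_def_nonneg: "pos_def A \<Longrightarrow> 0 \<le> x \<bullet> (A *v x)"
  unfolding pos_def_def by (cases "x = 0") (auto intro: less_imp_le)

lemma pos_def_Cauchy_Schwarz:
  assumes "transpose A = A" "pos_def A"
  shows "((A *v x) \<bullet> w)^2 \<le> (x \<bullet> (A *v x)) * (w \<bullet> (A *v w))"
proof (cases "x = 0")
  case False
  define \<sigma> where "\<sigma> = x \<bullet> (A *v x)"
  define p where "p = (A *v x) \<bullet> w"
  have "0 < \<sigma>" using False assms(2) by (simp add: \<sigma>_def pos_def_def)
  have "x \<bullet> (A *v w) = p"
    by (simp add: p_def symmetric_matrix_inner[OF assms(1)])
  have "w \<bullet> (A *v x) = p"
    by (simp add: p_def inner_commute)
  define d where "d = w - (p / \<sigma>) *\<^sub>R x"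
  have "d \<bullet> (A *v d) = w \<bullet> (A *v w) - (p / \<sigma>) * (w \<bullet> (A *v x)) - (p / \<sigma>) * (x \<bullet> (A *v w))
      + (p / \<sigma>) * (p / \<sigma>) * \<sigma>"
    by (simp add: d_def \<sigma>_def algebra_simps)
  also have "\<dots> = w \<bullet> (A *v w) - p^2 / \<sigma>"
    using \<open>0 < \<sigma>\<close> \<open>x \<bullet> (A *v w) = p\<close> \<open>w \<bullet> (A *v x) = p\<close>
    by (simp add: field_simps power2_eq_square)
  finally have "0 \<le> w \<bullet> (A *v w) - p^2 / \<sigma>"
    by (metis pos_def_nonneg assms(2))
  then show ?thesis
    using \<open>0 < \<sigma>\<close> by (simp add: \<sigma>_def[symmetric] p_def[symmetric] field_simps)
qed simp

section \<open>Determinants\<close>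

lemma sign_map_sum_id:
  assumes "p permutes (UNIV::'a::finite set)"
  shows "sign (map_sum p (id::'b::finite \<Rightarrow> 'b)) = sign p"
    and "sign (map_sum (id::'b \<Rightarrow> 'b) p) = sign p"
proof -
  have "map_sum p (id::'b \<Rightarrow> 'b) = map_permutation UNIV Inl p"
    and "map_sum (id::'b \<Rightarrow> 'b) p = map_permutation UNIV Inr p"
    by (auto simp: fun_eq_iff split_sum_all map_permutation_def restrict_id_def)
  then show "sign (map_sum p (id::'b \<Rightarrow> 'b)) = sign p" and "sign (map_sum (id::'b \<Rightarrow> 'b) p) = sign p"
    using assms by (simp_all add: sign_map_permutation)
qed

lemma map_sum_permutes:
  assumes "p permutes (UNIV::'a set)" "q permutes (UNIV::'b set)"
  shows "map_sum p q permutes (UNIV::('a + 'b) set)"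
proof (rule bij_imp_permutes)
  have "map_sum p q \<circ> map_sum (inv p) (inv q) = id" "map_sum (inv p) (inv q) \<circ> map_sum p q = id"
    using assms by (auto simp: fun_eq_iff split_sum_all permutes_inverses)
  then show "bij_betw (map_sum p q) UNIV UNIV"
    using o_bij by blast
qed simp

lemma permutes_sum_type_decompose:
  fixes p :: "'a::finite + 'b::finite \<Rightarrow> 'a + 'b"
  assumes p: "p permutes UNIV"
    and l: "\<And>a. \<exists>a'. p (Inl a) = Inl a'" and r: "\<And>b. \<exists>b'. p (Inr b) = Inr b'"
  obtains p1 p2 where "p1 permutes UNIV" "p2 permutes UNIV" "p = map_sum p1 p2"
proof
  define p1 where "p1 a = projl (p (Inl a))" for a
  define p2 where "p2 b = projr (p (Inr b))" for b
  have pl: "p (Inl a) = Inl (p1 a)" and pr: "p (Inr b) = Inr (p2 b)" for a b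
    using l[of a] r[of b] by (auto simp: p1_def p2_def)
  have "inj p" using p permutes_inj by blast
  then have "inj p1" "inj p2"
    by (metis injI inj_eq pl sum.inject(1), metis injI inj_eq pr sum.inject(2))
  then show "p1 permutes UNIV" "p2 permutes UNIV"
    using finite_UNIV_inj_surj by (auto intro!: bij_imp_permutes simp: bij_def)
  show "p = map_sum p1 p2"
    by (simp add: fun_eq_iff split_sum_all pl pr)
qed

lemma sign_map_sum:
  assumes "p permutes (UNIV::'a::finite set)" "q permutes (UNIV::'b::finite set)"
  shows "sign (map_sum p q) = sign p * sign q"
proof -
  have "map_sum p q = map_sum p id \<circ> map_sum id q"
    by (simp add: fun_eq_iff split_sum_all)
  moreover have "permutation (map_sum p (id::'b \<Rightarrow> 'b))" "permutation (map_sum (id::'a \<Rightarrow> 'a) q)"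
    using assms by (auto intro!: permutes_imp_permutation[OF finite_class.finite_UNIV] map_sum_permutes permutes_id)
  ultimately show ?thesis
    using assms by (simp add: sign_compose sign_map_sum_id)
qed

lemma det_block_diag: "det (block_diag X Y) = det X * det (Y :: real^'b::finite^'b)"
proof -
  let ?P1 = "{p. p permutes (UNIV::'a set)}" and ?P2 = "{p. p permutes (UNIV::'b set)}"
  let ?P = "{p. p permutes (UNIV::('a + 'b) set)}"
  let ?t = "\<lambda>p. of_int (sign p) * (\<Prod>i\<in>UNIV. block_diag X Y $ i $ p i)"
  let ?m = "\<lambda>(p1, p2). map_sum p1 p2"
  have vanish: "?t p = 0" if "p \<in> ?P - ?m ` (?P1 \<times> ?P2)" for p
  proof (rule ccontr)
    assume "?t p \<noteq> 0"
    then have nz: "block_diag X Y $ i $ p i \<noteq> 0" for i by auto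
    have "\<exists>a'. p (Inl a) = Inl a'" "\<exists>b'. p (Inr b) = Inr b'" for a b
      using nz[of "Inl a"] nz[of "Inr b"]
      by (cases "p (Inl a)"; cases "p (Inr b)"; simp add: block_diag_def)+
    moreover have "p permutes UNIV" using that by simp
    ultimately obtain p1 p2 where "p1 permutes UNIV" "p2 permutes UNIV" "p = map_sum p1 p2"
      using permutes_sum_type_decompose by metis
    then show False using that by auto
  qed
  have inj: "inj_on ?m (?P1 \<times> ?P2)"
    by (rule inj_onI) (auto simp: fun_eq_iff split_sum_all)
  have "det (block_diag X Y) = sum ?t ?P" by (simp add: det_def)
  also have "\<dots> = sum ?t (?m ` (?P1 \<times> ?P2))"
    using vanish by (intro sum.mono_neutral_right) (auto simp: map_sum_permutes)
  also have "\<dots> = sum (?t \<circ> ?m) (?P1 \<times> ?P2)"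
    by (rule sum.reindex[OF inj])
  also have "\<dots> = (\<Sum>(p1, p2)\<in>?P1 \<times> ?P2.
      (of_int (sign p1) * (\<Prod>a\<in>UNIV. X$a$p1 a)) * (of_int (sign p2) * (\<Prod>b\<in>UNIV. Y$b$p2 b)))"
    by (intro sum.cong) (auto simp: sign_map_sum prod_UNIV_sum_type block_diag_def)
  also have "\<dots> = det X * det Y"
    by (simp add: det_def sum_product sum.cartesian_product)
  finally show ?thesis .
qed

lemma det_scaleR_matrix: "det (c *\<^sub>R (A :: real^'n^'n)) = c ^ CARD('n) * det A"
proof -
  have "c *\<^sub>R A = (c *\<^sub>R mat 1) ** A"
    by (simp add: scalar_matrix_assoc[symmetric])
  moreover have "det (c *\<^sub>R mat 1 :: real^'n^'n) = c ^ CARD('n)"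
    by (subst det_diagonal) (auto simp: mat_def)
  ultimately show ?thesis by (simp add: det_mul)
qed

lemma det_block_diag_scaleR:
  "det (block_diag (a *\<^sub>R X) (b *\<^sub>R Y)) = a ^ CARD('a) * b ^ CARD('b) * det X * det (Y :: real^'b::finite^'b)"
  for X :: "real^'a::finite^'a"
  by (simp add: det_block_diag det_scaleR_matrix)

definition outer_prod :: "real^'n \<Rightarrow> real^'n \<Rightarrow> real^'n^'n" where
  "outer_prod x u = (\<chi> i j. x$i * u$j)"

lemma outer_prod_mult_vec: "outer_prod x u *v v = (u \<bullet> v) *\<^sub>R x"
  by (auto simp: outer_prod_def vec_eq_iff matrix_vector_mult_def inner_vec_def sum_distrib_left mult_ac)

lemma matrix_mul_outer_prod: "M ** outer_prod x u = outer_prod (M *v x) u"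
  by (auto simp: outer_prod_def vec_eq_iff matrix_matrix_mult_def matrix_vector_mult_def
      sum_distrib_left sum_distrib_right mult_ac)

lemma outer_prod_mul_matrix: "outer_prod x u ** M = outer_prod x (u v* M)"
  by (auto simp: outer_prod_def vec_eq_iff matrix_matrix_mult_def vector_matrix_mult_def
      sum_distrib_left mult_ac)

lemma outer_prod_mul_outer_prod: "outer_prod x u ** outer_prod z w = (u \<bullet> z) *\<^sub>R outer_prod x w"
  by (auto simp: outer_prod_def vec_eq_iff matrix_matrix_mult_def inner_vec_def
      sum_distrib_left sum_distrib_right mult_ac)

lemma outer_prod_add_left: "outer_prod (x + y) u = outer_prod x u + outer_prod y u"
  and outer_prod_add_right: "outer_prod x (u + w) = outer_prod x u + outer_prod x w"
  and outer_prod_scaleR_left: "outer_prod (c *\<^sub>R x) u = c *\<^sub>R outer_prod x u"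
  and outer_prod_scaleR_right: "outer_prod x (c *\<^sub>R u) = c *\<^sub>R outer_prod x u"
  by (auto simp: outer_prod_def vec_eq_iff algebra_simps)

lemma matrix_add_rdistrib: "(A + B) ** C = A ** C + B ** (C :: real^'n^'m)"
  by (simp add: matrix_matrix_mult_def vec_eq_iff sum.distrib[symmetric] distrib_right)

lemma det_rows_replace_identity:
  "det ((\<chi> i. if i = k then r else row i (mat 1)) :: real^'n^'n) = r$k"
proof -
  have "(\<Sum>i\<in>UNIV. r$i *s row i (mat 1 :: real^'n^'n)) = r"
    by (auto simp: vec_eq_iff row_def mat_def if_distrib cong: if_cong)
  then show ?thesis
    using cramer_lemma_transpose[of k r "mat 1 :: real^'n^'n"] by (simp only: det_I mult_1_right)
qed

text \<open>For \<open>x$k \<noteq> 0\<close>, the identity matrix with column \<open>k\<close> replaced by \<open>x\<close> conjugates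
  \<open>mat 1 + outer_prod x u\<close> into the identity with row \<open>k\<close> modified.\<close>
lemma det_mat1_add_outer_prod: "det (mat 1 + outer_prod x u :: real^'n^'n) = 1 + u \<bullet> x"
proof (cases "x = 0")
  case True
  then have "outer_prod x u = 0" by (simp add: outer_prod_def vec_eq_iff)
  then show ?thesis using True by simp
next
  case False
  then obtain k where xk: "x$k \<noteq> 0" by (auto simp: vec_eq_iff)
  define E where "E = (\<chi> i j. if j = k then x$i else (mat 1::real^'n^'n)$i$j)"
  define v where "v = u v* E"
  have det_E: "det E = x$k"
    using cramer_lemma[where A="mat 1 :: real^'n^'n" and k=k and x=x]
    by (simp only: E_def matrix_vector_mul_lid det_I mult_1_right)
  have "E *v axis k 1 = x"
    by (simp add: vec_eq_iff E_def matrix_vector_mult_def axis_def if_distrib cong: if_cong)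
  then have conj: "(mat 1 + outer_prod x u) ** E = E ** (mat 1 + outer_prod (axis k 1) v)"
    by (simp add: matrix_add_rdistrib matrix_add_ldistrib outer_prod_mul_matrix
        matrix_mul_outer_prod v_def)
  have "mat 1 + outer_prod (axis k 1) v = (\<chi> i. if i = k then axis k 1 + v else row i (mat 1 :: real^'n^'n))"
    by (auto simp: vec_eq_iff outer_prod_def row_def mat_def axis_def)
  moreover have "v$k = u \<bullet> x"
    by (simp add: v_def vector_matrix_mult_def E_def inner_vec_def mult.commute)
  ultimately have "det (mat 1 + outer_prod (axis k 1) v) = 1 + u \<bullet> x"
    by (simp add: det_rows_replace_identity)
  moreover have "det (mat 1 + outer_prod x u) * det E = det E * det (mat 1 + outer_prod (axis k 1) v)"
    using conj by (metis det_mul)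
  ultimately show ?thesis using det_E xk by simp
qed

lemma det_mat1_add_two_outer_prod:
  assumes "1 + u \<bullet> x \<noteq> 0"
  shows "det (mat 1 + outer_prod x u + outer_prod z w :: real^'n^'n)
    = (1 + u \<bullet> x) * (1 + w \<bullet> z) - (u \<bullet> z) * (w \<bullet> x)"
proof -
  define c where "c = 1 + u \<bullet> x"
  define z' where "z' = z - ((u \<bullet> z) / c) *\<^sub>R x"
  have "c \<noteq> 0" using assms by (simp add: c_def)
  have uz': "u \<bullet> z' = (u \<bullet> z) / c"
  proof -
    have "u \<bullet> z' = u \<bullet> z - ((u \<bullet> z) / c) * (c - 1)"
      by (simp add: z'_def inner_diff_right c_def)
    then show ?thesis using \<open>c \<noteq> 0\<close> by (simp add: field_simps)
  qed
  have "(mat 1 + outer_prod x u) ** (mat 1 + outer_prod z' w)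
      = mat 1 + outer_prod x u + outer_prod (z' + (u \<bullet> z') *\<^sub>R x) w"
    by (simp add: matrix_add_rdistrib matrix_add_ldistrib outer_prod_mul_outer_prod
        outer_prod_add_left outer_prod_scaleR_left add.assoc)
  also have "z' + (u \<bullet> z') *\<^sub>R x = z"
    unfolding uz' by (simp add: z'_def)
  finally have "det (mat 1 + outer_prod x u + outer_prod z w) = c * (1 + w \<bullet> z')"
    by (metis det_mul det_mat1_add_outer_prod c_def)
  also have "w \<bullet> z' = w \<bullet> z - ((u \<bullet> z) / c) * (w \<bullet> x)"
    by (simp add: z'_def inner_diff_right)
  also have "c * (1 + (w \<bullet> z - ((u \<bullet> z) / c) * (w \<bullet> x))) = c * (1 + w \<bullet> z) - (u \<bullet> z) * (w \<bullet> x)"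
    using \<open>c \<noteq> 0\<close> by (simp add: field_simps)
  finally show ?thesis by (simp add: c_def)
qed

lemma block_diag_add_rank2_factor:
  fixes X :: "real^'a::finite^'a" and Y :: "real^'b::finite^'b" and x :: "real^'a" and y :: "real^'b"
  assumes "a \<noteq> 0" "b \<noteq> 0"
  defines "p \<equiv> vec_inl (X *v x) :: real^('a + 'b)" and "q \<equiv> vec_inr (Y *v y) :: real^('a + 'b)"
  shows "block_diag (a *\<^sub>R X) (b *\<^sub>R Y) + c1 *\<^sub>R outer_prod p p
           + c2 *\<^sub>R (outer_prod p q + outer_prod q p) + c3 *\<^sub>R outer_prod q q
    = block_diag (a *\<^sub>R X) (b *\<^sub>R Y) ** (mat 1 + outer_prod (vec_inl x) ((c1 / a) *\<^sub>R p + (c2 / a) *\<^sub>R q)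
                                            + outer_prod (vec_inr y) ((c2 / b) *\<^sub>R p + (c3 / b) *\<^sub>R q))"
proof -
  have "block_diag (a *\<^sub>R X) (b *\<^sub>R Y) *v vec_inl x = a *\<^sub>R p"
    and "block_diag (a *\<^sub>R X) (b *\<^sub>R Y) *v vec_inr y = b *\<^sub>R q"
    by (simp_all add: p_def q_def block_diag_mult_vec vec_inl_scaleR vec_inr_scaleR
        scaleR_matrix_vector_assoc[symmetric])
  then have factor: "block_diag (a *\<^sub>R X) (b *\<^sub>R Y) ** (mat 1 + outer_prod (vec_inl x) u + outer_prod (vec_inr y) w)
      = block_diag (a *\<^sub>R X) (b *\<^sub>R Y) + outer_prod (a *\<^sub>R p) u + outer_prod (b *\<^sub>R q) w" for u w
    by (simp add: matrix_add_ldistrib matrix_mul_outer_prod)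
  show ?thesis
    unfolding factor using assms(1,2)
    by (simp add: outer_prod_scaleR_left outer_prod_scaleR_right outer_prod_add_right algebra_simps)
qed

lemma det_block_diag_add_rank2:
  fixes X :: "real^'a::finite^'a" and Y :: "real^'b::finite^'b" and x :: "real^'a" and y :: "real^'b"
  assumes "a \<noteq> 0" "b \<noteq> 0" "a + c1 * (x \<bullet> (X *v x)) \<noteq> 0"
  defines "p \<equiv> vec_inl (X *v x) :: real^('a + 'b)" and "q \<equiv> vec_inr (Y *v y) :: real^('a + 'b)"
  shows "det (block_diag (a *\<^sub>R X) (b *\<^sub>R Y) + c1 *\<^sub>R outer_prod p p
              + c2 *\<^sub>R (outer_prod p q + outer_prod q p) + c3 *\<^sub>R outer_prod q q)
    = a ^ (CARD('a) - 1) * b ^ (CARD('b) - 1)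
      * ((a + c1 * (x \<bullet> (X *v x))) * (b + c3 * (y \<bullet> (Y *v y))) - c2^2 * (x \<bullet> (X *v x)) * (y \<bullet> (Y *v y)))
      * det X * det Y"
proof -
  define \<sigma> where "\<sigma> = x \<bullet> (X *v x)"
  define \<tau> where "\<tau> = y \<bullet> (Y *v y)"
  define u where "u = (c1 / a) *\<^sub>R p + (c2 / a) *\<^sub>R q"
  define w where "w = (c2 / b) *\<^sub>R p + (c3 / b) *\<^sub>R q"
  have factor: "block_diag (a *\<^sub>R X) (b *\<^sub>R Y) + c1 *\<^sub>R outer_prod p p
      + c2 *\<^sub>R (outer_prod p q + outer_prod q p) + c3 *\<^sub>R outer_prod q q
    = block_diag (a *\<^sub>R X) (b *\<^sub>R Y) ** (mat 1 + outer_prod (vec_inl x) u + outer_prod (vec_inr y) w)"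
    unfolding p_def q_def u_def w_def by (rule block_diag_add_rank2_factor[OF assms(1,2)])
  have "p \<bullet> vec_inl x = \<sigma>" "q \<bullet> vec_inl x = 0" "p \<bullet> vec_inr y = 0" "q \<bullet> vec_inr y = \<tau>"
    by (simp_all add: p_def q_def \<sigma>_def \<tau>_def inner_commute)
  then have "u \<bullet> vec_inl x = c1 / a * \<sigma>" "u \<bullet> vec_inr y = c2 / a * \<tau>"
    "w \<bullet> vec_inl x = c2 / b * \<sigma>" "w \<bullet> vec_inr y = c3 / b * \<tau>"
    by (simp_all add: u_def w_def inner_add_left)
  moreover have "1 + c1 / a * \<sigma> \<noteq> 0"
    using assms(1,3) by (simp add: \<sigma>_def field_simps)
  moreover have "det (block_diag (a *\<^sub>R X) (b *\<^sub>R Y))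
      = a * a ^ (CARD('a) - 1) * (b * b ^ (CARD('b) - 1)) * det X * det Y"
    by (simp add: det_block_diag_scaleR power_Suc[symmetric] finite_UNIV_card_ge_0)
  ultimately have "det (block_diag (a *\<^sub>R X) (b *\<^sub>R Y) + c1 *\<^sub>R outer_prod p p
      + c2 *\<^sub>R (outer_prod p q + outer_prod q p) + c3 *\<^sub>R outer_prod q q)
      = a * a ^ (CARD('a) - 1) * (b * b ^ (CARD('b) - 1)) * det X * det Y
        * ((1 + c1 / a * \<sigma>) * (1 + c3 / b * \<tau>) - (c2 / a * \<tau>) * (c2 / b * \<sigma>))"
    unfolding factor det_mul by (simp add: det_mat1_add_two_outer_prod)
  also have "\<dots> = a ^ (CARD('a) - 1) * b ^ (CARD('b) - 1)
      * ((a + c1 * \<sigma>) * (b + c3 * \<tau>) - c2^2 * \<sigma> * \<tau>) * det X * det Y"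
    using assms(1,2) by (simp add: field_simps power2_eq_square)
  finally show ?thesis
    by (simp add: \<sigma>_def \<tau>_def)
qed

section \<open>Partial derivatives\<close>

lemma Ck_on2_SucD: "Ck_on2 (Suc k) U g \<Longrightarrow> Ck_on2 k U g"
proof (induction k arbitrary: g)
  case (Suc k)
  then show ?case
    unfolding Ck_on2.simps(2)[of "Suc k" U g] Ck_on2.simps(2)[of k U g] using Suc.IH by blast
qed simp

lemma has_real_derivative_pd_s:
  assumes "Ck_on2 (Suc k) U g" "(s, t) \<in> U"
  shows "((\<lambda>u. g u t) has_real_derivative pd_s g s t) (at s)"
  using assms by (fastforce simp: pd_s_def DERIV_deriv_iff_real_differentiable)

lemma has_real_derivative_pd_t:
  assumes "Ck_on2 (Suc k) U g" "(s, t) \<in> U"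
  shows "((\<lambda>u. g s u) has_real_derivative pd_t g s t) (at t)"
  using assms by (fastforce simp: pd_t_def DERIV_deriv_iff_real_differentiable)

lemma has_derivative_of_partials:
  assumes U: "open U" "(s, t) \<in> U" and g: "Ck_on2 (Suc 0) U g"
  shows "((\<lambda>p. g (fst p) (snd p)) has_derivative (\<lambda>h. pd_s g s t * fst h + pd_t g s t * snd h)) (at (s, t))"
proof -
  obtain X B where XB: "open X" "open B" "(s, t) \<in> X \<times> B" "X \<times> B \<subseteq> U"
    using open_prod_elim[OF U] by blast
  obtain r where r: "r > 0" "ball t r \<subseteq> B"
    using XB open_contains_ball by blast
  let ?Y = "ball t r"
  have "((\<lambda>x. g x t) has_derivative (*) (pd_s g s t)) (at s within X)"
    using has_real_derivative_pd_s[OF g U(2)]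
    by (simp add: has_field_derivative_def has_derivative_at_withinI)
  moreover have "((\<lambda>y. g x y) has_derivative blinfun_apply (blinfun_mult_right (pd_t g x y))) (at y within ?Y)"
    if "x \<in> X" "y \<in> ?Y" for x y
  proof -
    have "(x, y) \<in> U" using that XB r by blast
    then show ?thesis
      using has_real_derivative_pd_t[OF g] by (simp add: has_field_derivative_def has_derivative_at_withinI)
  qed
  moreover have "continuous (at (s, t) within X \<times> ?Y) (\<lambda>(x, y). blinfun_mult_right (pd_t g x y))"
  proof -
    have "isCont (\<lambda>p. pd_t g (fst p) (snd p)) (s, t)"
      using g U continuous_on_eq_continuous_at by force
    then show ?thesis
      using bounded_linear.continuous[OF bounded_linear_blinfun_mult_right]
        continuous_at_imp_continuous_within by (fastforce simp: case_prod_beta')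
  qed
  ultimately have "((\<lambda>(x, y). g x y) has_derivative
      (\<lambda>(tx, ty). pd_s g s t * tx + blinfun_apply (blinfun_mult_right (pd_t g s t)) ty)) (at (s, t) within X \<times> ?Y)"
    using r XB by (intro has_derivative_partialsI) auto
  moreover have "at (s, t) within X \<times> ?Y = at (s, t)"
    using XB r by (intro at_within_open) (auto simp: open_Times)
  ultimately show ?thesis by (simp add: case_prod_beta')
qed

lemma has_derivative_Ck_on2_compose:
  assumes "open U" "Ck_on2 (Suc 0) U g" "(\<sigma> z, \<tau> z) \<in> U"
    and "(\<sigma> has_derivative \<sigma>') (at z within S)" "(\<tau> has_derivative \<tau>') (at z within S)"
  shows "((\<lambda>z. g (\<sigma> z) (\<tau> z)) has_derivative
           (\<lambda>h. pd_s g (\<sigma> z) (\<tau> z) * \<sigma>' h + pd_t g (\<sigma> z) (\<tau> z) * \<tau>' h)) (at z within S)"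
  using has_derivative_compose[OF has_derivative_Pair[OF assms(4,5)]
      has_derivative_of_partials[OF assms(1,3,2)]]
  by simp

lemma has_real_derivative_along_line:
  fixes \<phi> :: "'a::real_normed_vector \<Rightarrow> real"
  assumes "(\<phi> has_derivative \<phi>') (at z)"
  shows "((\<lambda>r. \<phi> (z + r *\<^sub>R v)) has_real_derivative \<phi>' v) (at 0)"
proof -
  have "((\<lambda>r. z + r *\<^sub>R v) has_derivative (\<lambda>r. r *\<^sub>R v)) (at 0)"
    by (auto intro!: derivative_eq_intros)
  from has_derivative_compose[OF this] assms
  have "((\<lambda>r. \<phi> (z + r *\<^sub>R v)) has_derivative (\<lambda>r. \<phi>' (r *\<^sub>R v))) (at 0)"
    by simp
  moreover have "(\<lambda>r. \<phi>' (r *\<^sub>R v)) = (*) (\<phi>' v)"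
    using has_derivative_bounded_linear[OF assms]
    by (auto simp: fun_eq_iff linear_simps(5) bounded_linear.linear)
  ultimately show ?thesis
    by (simp add: has_field_derivative_def)
qed

lemma pdy_eq_derivative:
  "(\<phi> has_derivative \<phi>') (at z) \<Longrightarrow> pdy i \<phi> z = \<phi>' (axis i 1)"
  unfolding pdy_def by (rule DERIV_imp_deriv[OF has_real_derivative_along_line])

lemma has_derivative_quadratic_form:
  fixes A :: "real^'n^'n" and P :: "'a::euclidean_space \<Rightarrow> real^'n"
  assumes "transpose A = A" "linear P"
  shows "((\<lambda>z. P z \<bullet> (A *v P z)) has_derivative (\<lambda>h. 2 * ((A *v P z) \<bullet> P h))) (at z)"
proof -
  have "bounded_linear P" "bounded_linear (\<lambda>z. A *v P z)"
    using assms(2) linear_compose[OF assms(2) matrix_vector_mul_linear[of A]]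
    by (simp_all add: linear_conv_bounded_linear o_def)
  from has_derivative_inner[OF this[THEN bounded_linear_imp_has_derivative]]
  have "((\<lambda>z. P z \<bullet> (A *v P z)) has_derivative (\<lambda>h. P z \<bullet> (A *v P h) + P h \<bullet> (A *v P z))) (at z)" .
  moreover have "P z \<bullet> (A *v P h) + P h \<bullet> (A *v P z) = 2 * ((A *v P z) \<bullet> P h)" for h
    using symmetric_matrix_inner[OF assms(1), of "P z" "P h"] by (simp add: inner_commute)
  ultimately show ?thesis by simp
qed

lemma has_derivative_matrix_inner_linear:
  fixes M :: "real^'n^'m" and P :: "'a::euclidean_space \<Rightarrow> real^'n"
  assumes "linear P"
  shows "((\<lambda>z. (M *v P z) \<bullet> c) has_derivative (\<lambda>h. (M *v P h) \<bullet> c)) F"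
proof -
  have "linear (\<lambda>z. (M *v P z) \<bullet> c)"
    using assms by (auto intro!: linearI simp: linear_add linear_scale matrix_vector_right_distrib
        inner_add_left matrix_vector_mult_scaleR)
  then show ?thesis
    by (simp add: bounded_linear_imp_has_derivative linear_conv_bounded_linear)
qed

text \<open>The function \<open>u \<mapsto> sqrt u * g u\<close> vanishes at \<open>0\<close> and has the positive derivative
  \<open>(g u + 2 * u * g' u) / (2 * sqrt u)\<close>.\<close>
lemma sqrt_weighted_DERIV_pos_imp_pos:
  fixes g g' :: "real \<Rightarrow> real"
  assumes "0 < x" and cont: "continuous_on {0..x} g"
    and deriv: "\<And>u. 0 < u \<Longrightarrow> u < x \<Longrightarrow> (g has_real_derivative g' u) (at u)"
    and pos: "\<And>u. 0 < u \<Longrightarrow> u < x \<Longrightarrow> 0 < g u + 2 * u * g' u"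
  shows "0 < g x"
proof -
  let ?h = "\<lambda>u. sqrt u * g u"
  have "?h 0 < ?h x"
  proof (rule DERIV_pos_imp_increasing_open[OF \<open>0 < x\<close>])
    fix u assume u: "0 < u" "u < x"
    then have "DERIV ?h u :> inverse (sqrt u) / 2 * g u + g' u * sqrt u"
      by (intro DERIV_mult DERIV_real_sqrt deriv)
    moreover have "inverse (sqrt u) / 2 * g u + g' u * sqrt u = (g u + 2 * u * g' u) / (2 * sqrt u)"
      using u by (simp add: field_simps)
    ultimately show "\<exists>y. DERIV ?h u :> y \<and> 0 < y"
      using pos[OF u] u by auto
  qed (intro continuous_intros cont)
  then show ?thesis
    using \<open>0 < x\<close> by (simp add: zero_less_mult_iff)
qed

section \<open>Homogeneous functions of degree one\<close>

lemma mem_punctured_quadrant_iff: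
  "(s, t) \<in> punctured_quadrant \<longleftrightarrow> 0 \<le> s \<and> 0 \<le> t \<and> (s \<noteq> 0 \<or> t \<noteq> 0)"
  by (auto simp: punctured_quadrant_def)

lemma ray_derivative_eq:
  assumes "open U" "Ck_on2 (Suc 0) U g" "(s, t) \<in> U"
    and ray: "\<And>l. 0 < l \<Longrightarrow> g (l * s) (l * t) = l * c + d"
  shows "s * pd_s g s t + t * pd_t g s t = c"
proof -
  have "((\<lambda>l. g (l * s) (l * t)) has_derivative
      (\<lambda>h. pd_s g (1 * s) (1 * t) * (h * s) + pd_t g (1 * s) (1 * t) * (h * t))) (at 1)"
    by (rule has_derivative_Ck_on2_compose[OF assms(1,2)]) (use assms(3) in \<open>auto intro!: derivative_eq_intros\<close>)
  then have "((\<lambda>l. g (l * s) (l * t)) has_derivative (\<lambda>h. pd_s g s t * (h * s) + pd_t g s t * (h * t))) (at 1)"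
    by simp
  then have "((\<lambda>l. l * c + d) has_derivative (\<lambda>h. pd_s g s t * (h * s) + pd_t g s t * (h * t))) (at 1)"
    by (rule has_derivative_transform_within_open[of _ _ _ _ "{0<..}"]) (auto simp: ray)
  moreover have "((\<lambda>l. l * c + d) has_derivative (\<lambda>h. h * c)) (at 1)"
    by (auto intro!: derivative_eq_intros)
  ultimately have "(\<lambda>h. pd_s g s t * (h * s) + pd_t g s t * (h * t)) = (\<lambda>h. h * c)"
    by (rule has_derivative_unique)
  from fun_cong[OF this, of 1] show ?thesis by (simp add: mult_ac)
qed

lemma vanishing_extends_to_boundary:
  fixes h :: "real \<Rightarrow> real \<Rightarrow> real"
  assumes "open U" "(s, t) \<in> U" "0 \<le> s" "0 \<le> t" and cont: "continuous_on U (\<lambda>p. h (fst p) (snd p))"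
    and vanish: "\<And>u v. 0 < u \<Longrightarrow> 0 < v \<Longrightarrow> h u v = 0"
  shows "h s t = 0"
proof -
  define X where "X n = (s + inverse (real (Suc n)), t + inverse (real (Suc n)))" for n
  have ic: "isCont (\<lambda>p. h (fst p) (snd p)) (s, t)"
    using assms(1,2) cont continuous_on_eq_continuous_at by blast
  have "(\<lambda>n. s + inverse (real (Suc n))) \<longlonglongrightarrow> s + 0" "(\<lambda>n. t + inverse (real (Suc n))) \<longlonglongrightarrow> t + 0"
    by (intro tendsto_add tendsto_const LIMSEQ_inverse_real_of_nat)+
  then have "X \<longlonglongrightarrow> (s, t)"
    unfolding X_def by (simp add: tendsto_Pair)
  from isCont_tendsto_compose[OF ic this]
  have "(\<lambda>n. h (fst (X n)) (snd (X n))) \<longlonglongrightarrow> h s t" by simp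
  moreover have "h (fst (X n)) (snd (X n)) = 0" for n
    using assms(3,4) by (auto simp: X_def intro!: vanish add_nonneg_pos)
  ultimately have "(\<lambda>n. 0) \<longlonglongrightarrow> h s t" by simp
  then show ?thesis
    using LIMSEQ_unique[OF _ tendsto_const[of 0]] by metis
qed

locale homogeneous_C2 =
  fixes f :: "real \<Rightarrow> real \<Rightarrow> real" and U :: "(real \<times> real) set"
  assumes open_U: "open U" and punctured_quadrant_subset: "punctured_quadrant \<subseteq> U"
    and C2: "Ck_on2 (Suc (Suc 0)) U f"
    and homogeneous: "\<forall>l s t. 0 < l \<longrightarrow> 0 \<le> s \<longrightarrow> 0 \<le> t \<longrightarrow> f (l * s) (l * t) = l * f s t"
begin

lemma mem_U: "0 \<le> s \<Longrightarrow> 0 \<le> t \<Longrightarrow> s \<noteq> 0 \<or> t \<noteq> 0 \<Longrightarrow> (s, t) \<in> U"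
  using punctured_quadrant_subset mem_punctured_quadrant_iff by blast

lemma C1_f: "Ck_on2 (Suc 0) U f"
  using Ck_on2_SucD[OF C2] .

lemma C1_pd_s: "Ck_on2 (Suc 0) U (pd_s f)"
  and C1_pd_t: "Ck_on2 (Suc 0) U (pd_t f)"
  using C2 by (simp_all only: Ck_on2.simps(2)[of "Suc 0"])

lemma continuous_on_partials:
  "continuous_on U (\<lambda>p. pd_s f (fst p) (snd p))"
  "continuous_on U (\<lambda>p. pd_t f (fst p) (snd p))"
  "continuous_on U (\<lambda>p. pd_s (pd_s f) (fst p) (snd p))"
  "continuous_on U (\<lambda>p. pd_t (pd_s f) (fst p) (snd p))"
  "continuous_on U (\<lambda>p. pd_s (pd_t f) (fst p) (snd p))"
  "continuous_on U (\<lambda>p. pd_t (pd_t f) (fst p) (snd p))"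
  using C1_f C1_pd_s C1_pd_t by simp_all

lemma euler_homogeneous:
  assumes "(s, t) \<in> punctured_quadrant"
  shows "f s t = s * pd_s f s t + t * pd_t f s t"
  by (rule ray_derivative_eq[OF open_U C1_f, where d=0, symmetric])
    (use assms punctured_quadrant_subset homogeneous in \<open>auto simp: mem_punctured_quadrant_iff\<close>)

lemma pd_s_homogeneous:
  assumes "0 < s" "0 \<le> t" "0 < l"
  shows "pd_s f (l * s) (l * t) = pd_s f s t"
proof -
  have "((\<lambda>u. f (l * u) (l * t)) has_real_derivative pd_s f (l * s) (l * t) * l) (at s)"
    using assms by (intro DERIV_chain2[where g="\<lambda>u. l * u", OF has_real_derivative_pd_s[OF C1_f]] mem_U)
      (auto intro!: derivative_eq_intros)
  then have "((\<lambda>u. l * f u t) has_real_derivative pd_s f (l * s) (l * t) * l) (at s)"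
    by (rule has_field_derivative_transform_within_open[of _ _ _ "{0<..}"])
      (use assms homogeneous in auto)
  moreover have "((\<lambda>u. l * f u t) has_real_derivative l * pd_s f s t) (at s)"
    using assms by (intro DERIV_cmult has_real_derivative_pd_s[OF C1_f] mem_U) auto
  ultimately show ?thesis
    using assms DERIV_unique by fastforce
qed

lemma pd_t_homogeneous:
  assumes "0 \<le> s" "0 < t" "0 < l"
  shows "pd_t f (l * s) (l * t) = pd_t f s t"
proof -
  have "((\<lambda>u. f (l * s) (l * u)) has_real_derivative pd_t f (l * s) (l * t) * l) (at t)"
    using assms by (intro DERIV_chain2[where g="\<lambda>u. l * u", OF has_real_derivative_pd_t[OF C1_f]] mem_U)
      (auto intro!: derivative_eq_intros)
  then have "((\<lambda>u. l * f s u) has_real_derivative pd_t f (l * s) (l * t) * l) (at t)"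
    by (rule has_field_derivative_transform_within_open[of _ _ _ "{0<..}"])
      (use assms homogeneous in auto)
  moreover have "((\<lambda>u. l * f s u) has_real_derivative l * pd_t f s t) (at t)"
    using assms by (intro DERIV_cmult has_real_derivative_pd_t[OF C1_f] mem_U) auto
  ultimately show ?thesis
    using assms DERIV_unique by fastforce
qed

lemma euler_pd_s_interior:
  assumes "0 < s" "0 < t"
  shows "s * pd_s (pd_s f) s t + t * pd_t (pd_s f) s t = 0"
proof (rule ray_derivative_eq[OF open_U C1_pd_s, where d="pd_s f s t"])
  show "(s, t) \<in> U" using assms by (intro mem_U) auto
  fix l :: real assume "0 < l"
  then show "pd_s f (l * s) (l * t) = l * 0 + pd_s f s t"
    using pd_s_homogeneous[of s t l] assms by simp
qed

lemma euler_pd_t_interior: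
  assumes "0 < s" "0 < t"
  shows "s * pd_s (pd_t f) s t + t * pd_t (pd_t f) s t = 0"
proof (rule ray_derivative_eq[OF open_U C1_pd_t, where d="pd_t f s t"])
  show "(s, t) \<in> U" using assms by (intro mem_U) auto
  fix l :: real assume "0 < l"
  then show "pd_t f (l * s) (l * t) = l * 0 + pd_t f s t"
    using pd_t_homogeneous[of s t l] assms by simp
qed

text \<open>Differentiating the Euler identity in \<open>s\<close> gives a second relation for the mixed partial
  derivative; comparing it with \<open>euler_pd_s_interior\<close> forces symmetry.\<close>
lemma euler_pd_s_pd_t_interior:
  assumes "0 < s" "0 < t"
  shows "s * pd_s (pd_s f) s t + t * pd_s (pd_t f) s t = 0"
proof -
  have U: "(s, t) \<in> U" using assms by (intro mem_U) auto
  have "((\<lambda>u. u * pd_s f u t + t * pd_t f u t) has_real_derivative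
          (1 * pd_s f s t + s * pd_s (pd_s f) s t) + t * pd_s (pd_t f) s t) (at s)"
    using DERIV_add[OF DERIV_mult[OF DERIV_ident has_real_derivative_pd_s[OF C1_pd_s U]]
        DERIV_cmult[OF has_real_derivative_pd_s[OF C1_pd_t U], of t]]
    by (simp add: mult_ac)
  then have "((\<lambda>u. f u t) has_real_derivative
          (1 * pd_s f s t + s * pd_s (pd_s f) s t) + t * pd_s (pd_t f) s t) (at s)"
    by (rule has_field_derivative_transform_within_open[of _ _ _ "{0<..}"])
      (use assms in \<open>auto simp: euler_homogeneous mem_punctured_quadrant_iff\<close>)
  from DERIV_unique[OF this has_real_derivative_pd_s[OF C1_f U]] show ?thesis by simp
qed

lemma pd_mixed_symmetric:
  assumes "(s, t) \<in> punctured_quadrant"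
  shows "pd_s (pd_t f) s t = pd_t (pd_s f) s t"
proof -
  let ?h = "\<lambda>u v. pd_s (pd_t f) u v - pd_t (pd_s f) u v"
  have "?h s t = 0"
  proof (rule vanishing_extends_to_boundary[OF open_U, of s t ?h])
    show "continuous_on U (\<lambda>p. ?h (fst p) (snd p))"
      using continuous_on_partials by (intro continuous_intros)
  next
    fix u v :: real assume uv: "0 < u" "0 < v"
    have "u * pd_s (pd_s f) u v + v * pd_t (pd_s f) u v = 0"
      using euler_pd_s_interior[OF uv] .
    moreover have "u * pd_s (pd_s f) u v + v * pd_s (pd_t f) u v = 0"
      using euler_pd_s_pd_t_interior[OF uv] .
    ultimately have "v * pd_s (pd_t f) u v = v * pd_t (pd_s f) u v"
      by linarith
    then show "?h u v = 0"
      using \<open>0 < v\<close> by simp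
  next
    show "(s, t) \<in> U" "0 \<le> s" "0 \<le> t"
      using assms punctured_quadrant_subset by (auto simp: mem_punctured_quadrant_iff)
  qed
  then show ?thesis by simp
qed

lemma euler_pd_s:
  assumes "(s, t) \<in> punctured_quadrant"
  shows "s * pd_s (pd_s f) s t + t * pd_t (pd_s f) s t = 0"
proof (rule vanishing_extends_to_boundary[OF open_U,
      of s t "\<lambda>u v. u * pd_s (pd_s f) u v + v * pd_t (pd_s f) u v", simplified])
  show "continuous_on U (\<lambda>p. fst p * pd_s (pd_s f) (fst p) (snd p) + snd p * pd_t (pd_s f) (fst p) (snd p))"
    using continuous_on_partials by (intro continuous_intros)
qed (use assms punctured_quadrant_subset euler_pd_s_interior in \<open>auto simp: mem_punctured_quadrant_iff\<close>)

lemma euler_pd_t: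
  assumes "(s, t) \<in> punctured_quadrant"
  shows "s * pd_t (pd_s f) s t + t * pd_t (pd_t f) s t = 0"
proof -
  have "s * pd_s (pd_t f) s t + t * pd_t (pd_t f) s t = 0"
  proof (rule vanishing_extends_to_boundary[OF open_U,
        of s t "\<lambda>u v. u * pd_s (pd_t f) u v + v * pd_t (pd_t f) u v", simplified])
    show "continuous_on U (\<lambda>p. fst p * pd_s (pd_t f) (fst p) (snd p) + snd p * pd_t (pd_t f) (fst p) (snd p))"
      using continuous_on_partials by (intro continuous_intros)
  qed (use assms punctured_quadrant_subset euler_pd_t_interior in \<open>auto simp: mem_punctured_quadrant_iff\<close>)
  then show ?thesis
    using pd_mixed_symmetric[OF assms] by simp
qed

lemma hessian_discriminant_eq:
  assumes "(s, t) \<in> punctured_quadrant"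
  shows "(pd_s f s t + 2 * s * pd_s (pd_s f) s t) * (pd_t f s t + 2 * t * pd_t (pd_t f) s t)
           - 4 * s * t * (pd_t (pd_s f) s t)^2
         = pd_s f s t * pd_t f s t - 2 * f s t * pd_t (pd_s f) s t"
proof -
  let ?fs = "pd_s f s t" and ?ft = "pd_t f s t" and ?fss = "pd_s (pd_s f) s t"
    and ?fst = "pd_t (pd_s f) s t" and ?ftt = "pd_t (pd_t f) s t"
  have fss: "s * ?fss = - (t * ?fst)" and ftt: "t * ?ftt = - (s * ?fst)"
    using euler_pd_s[OF assms] euler_pd_t[OF assms] by simp_all
  have "(?fs + 2 * s * ?fss) * (?ft + 2 * t * ?ftt) - 4 * s * t * ?fst^2
      = ?fs * ?ft + 2 * ?ft * (s * ?fss) + 2 * ?fs * (t * ?ftt) + 4 * (s * ?fss) * (t * ?ftt)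
        - 4 * s * t * ?fst^2"
    by (simp add: algebra_simps power2_eq_square)
  also have "\<dots> = ?fs * ?ft - 2 * (s * ?fs + t * ?ft) * ?fst"
    unfolding fss ftt by (simp add: algebra_simps power2_eq_square)
  finally show ?thesis
    using euler_homogeneous[OF assms] by simp
qed

lemma pd_t_pd_s_eq_0_on_axes:
  assumes "(s, t) \<in> punctured_quadrant" "s = 0 \<or> t = 0"
  shows "pd_t (pd_s f) s t = 0"
  using assms euler_pd_s[OF assms(1)] euler_pd_t[OF assms(1)]
  by (auto simp: mem_punctured_quadrant_iff)

lemma pd_s_pd_s_eq_0_on_s_axis:
  "0 < s \<Longrightarrow> pd_s (pd_s f) s 0 = 0"
  using euler_pd_s[of s 0] by (simp add: mem_punctured_quadrant_iff)

lemma pd_t_pd_t_eq_0_on_t_axis: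
  "0 < t \<Longrightarrow> pd_t (pd_t f) 0 t = 0"
  using euler_pd_t[of 0 t] by (simp add: mem_punctured_quadrant_iff)

end

section \<open>The fundamental tensor of the product metric\<close>

lemma binary_quadratic_form_pos:
  fixes a b c x y :: real
  assumes "0 < a" "b^2 < 4 * a * c" "x \<noteq> 0 \<or> y \<noteq> 0"
  shows "0 < a * x^2 + b * x * y + c * y^2"
proof -
  have "4 * a * (a * x^2 + b * x * y + c * y^2) = (2 * a * x + b * y)^2 + (4 * a * c - b^2) * y^2"
    by (simp add: power2_eq_square algebra_simps)
  moreover have "0 < (2 * a * x + b * y)^2 + (4 * a * c - b^2) * y^2"
  proof (cases "y = 0")
    case True
    then show ?thesis using assms by simp
  next
    case False
    then have "0 < (4 * a * c - b^2) * y^2" using assms(2) by simp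
    then show ?thesis by (simp add: add_nonneg_pos)
  qed
  ultimately have "0 < 4 * a * (a * x^2 + b * x * y + c * y^2)"
    by simp
  then show ?thesis
    using \<open>0 < a\<close> by (simp add: zero_less_mult_iff)
qed

text \<open>This is \<open>g(v, v)\<close> with \<open>V1, V2\<close> the values of \<open>\<alpha>\<^sub>1\<^sup>2, \<alpha>\<^sub>2\<^sup>2\<close> at \<open>v\<close> and \<open>p, q\<close>
  the \<open>\<alpha>\<^sub>1\<close>-, \<open>\<alpha>\<^sub>2\<close>-products of \<open>y\<close> and \<open>v\<close>. Multiplied by \<open>s t\<close>, it splits into two
  Cauchy--Schwarz defects and a binary quadratic form in \<open>(p, q)\<close>.\<close>
lemma tensor_quadratic_form_pos:
  fixes s t fs ft fss fst ftt V1 V2 p q :: real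
  assumes st: "0 < s" "0 < t" and pos: "0 < fs" "0 < ft" "0 < fs + 2 * s * fss"
    and disc: "0 < (fs + 2 * s * fss) * (ft + 2 * t * ftt) - 4 * s * t * fst^2"
    and CS: "p^2 \<le> s * V1" "q^2 \<le> t * V2" and V: "0 \<le> V1" "0 \<le> V2" "0 < V1 \<or> 0 < V2"
  shows "0 < fs * V1 + ft * V2 + 2 * fss * p^2 + 4 * fst * p * q + 2 * ftt * q^2"
proof (cases "p = 0 \<and> q = 0")
  case True
  then show ?thesis using pos V by (auto intro: add_pos_nonneg add_nonneg_pos)
next
  case False
  define K where "K = (t * (fs + 2 * s * fss)) * p^2 + (4 * s * t * fst) * p * q + (s * (ft + 2 * t * ftt)) * q^2"
  have "4 * (t * (fs + 2 * s * fss)) * (s * (ft + 2 * t * ftt)) - (4 * s * t * fst)^2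
      = 4 * s * t * ((fs + 2 * s * fss) * (ft + 2 * t * ftt) - 4 * s * t * fst^2)"
    by (simp add: power2_eq_square algebra_simps)
  moreover have "0 < 4 * s * t * ((fs + 2 * s * fss) * (ft + 2 * t * ftt) - 4 * s * t * fst^2)"
    using disc st by simp
  ultimately have "(4 * s * t * fst)^2 < 4 * (t * (fs + 2 * s * fss)) * (s * (ft + 2 * t * ftt))"
    by linarith
  then have "0 < K"
    unfolding K_def using False st pos by (intro binary_quadratic_form_pos) auto
  moreover have "s * t * (fs * V1 + ft * V2 + 2 * fss * p^2 + 4 * fst * p * q + 2 * ftt * q^2)
      = fs * t * (s * V1 - p^2) + ft * s * (t * V2 - q^2) + K"
    by (simp add: K_def power2_eq_square algebra_simps)
  moreover have "0 \<le> fs * t * (s * V1 - p^2)" "0 \<le> ft * s * (t * V2 - q^2)"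
    using st pos CS by simp_all
  ultimately have "0 < s * t * (fs * V1 + ft * V2 + 2 * fss * p^2 + 4 * fst * p * q + 2 * ftt * q^2)"
    by linarith
  then show ?thesis
    using st by (metis mult_pos_pos zero_less_mult_pos)
qed

definition finsler_conditions :: "(real \<Rightarrow> real \<Rightarrow> real) \<Rightarrow> real \<Rightarrow> real \<Rightarrow> bool" where
  "finsler_conditions f s t \<longleftrightarrow>
     pd_s f s t > 0 \<and> pd_t f s t > 0 \<and>
     pd_s f s t + 2 * s * pd_s (pd_s f) s t > 0 \<and>
     pd_t f s t + 2 * t * pd_t (pd_t f) s t > 0 \<and>
     pd_s f s t * pd_t f s t - 2 * f s t * pd_t (pd_s f) s t > 0"

locale product_finsler = homogeneous_C2 f U for f U +
  fixes A :: "real^'n1^'n1" and B :: "real^'n2^'n2"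
  assumes sym_A: "transpose A = A" and pos_def_A: "pos_def A"
    and sym_B: "transpose B = B" and pos_def_B: "pos_def B"
    and nonneg: "\<forall>s t. 0 \<le> s \<longrightarrow> 0 \<le> t \<longrightarrow> 0 \<le> f s t"
begin

abbreviation S :: "real^('n1 + 'n2) \<Rightarrow> real" where "S \<equiv> alpha1_sq A"

abbreviation T :: "real^('n1 + 'n2) \<Rightarrow> real" where "T \<equiv> alpha2_sq B"

abbreviation f_s :: "real^('n1 + 'n2) \<Rightarrow> real" where "f_s y \<equiv> pd_s f (S y) (T y)"

abbreviation f_t :: "real^('n1 + 'n2) \<Rightarrow> real" where "f_t y \<equiv> pd_t f (S y) (T y)"

abbreviation f_ss :: "real^('n1 + 'n2) \<Rightarrow> real" where "f_ss y \<equiv> pd_s (pd_s f) (S y) (T y)"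

abbreviation f_st :: "real^('n1 + 'n2) \<Rightarrow> real" where "f_st y \<equiv> pd_t (pd_s f) (S y) (T y)"

abbreviation f_tt :: "real^('n1 + 'n2) \<Rightarrow> real" where "f_tt y \<equiv> pd_t (pd_t f) (S y) (T y)"

abbreviation lower1 :: "real^('n1 + 'n2) \<Rightarrow> real^('n1 + 'n2)" where "lower1 y \<equiv> vec_inl (A *v comp1 y)"

abbreviation lower2 :: "real^('n1 + 'n2) \<Rightarrow> real^('n1 + 'n2)" where "lower2 y \<equiv> vec_inr (B *v comp2 y)"

lemma alpha1_sq_nonneg: "0 \<le> S z"
  and alpha2_sq_nonneg: "0 \<le> T z"
  by (simp_all add: alpha1_sq_def alpha2_sq_def pos_def_nonneg pos_def_A pos_def_B)

lemma alpha1_sq_eq_0_iff: "S z = 0 \<longleftrightarrow> comp1 z = 0"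
  and alpha2_sq_eq_0_iff: "T z = 0 \<longleftrightarrow> comp2 z = 0"
  using pos_def_A pos_def_B by (auto simp: alpha1_sq_def alpha2_sq_def pos_def_def)

lemma alpha1_sq_pos_imp_comp1_nonzero: "0 < S z \<Longrightarrow> comp1 z \<noteq> 0"
  and alpha2_sq_pos_imp_comp2_nonzero: "0 < T z \<Longrightarrow> comp2 z \<noteq> 0"
  by (auto simp: alpha1_sq_def alpha2_sq_def)

lemma alpha_sq_mem_punctured_quadrant:
  assumes "z \<noteq> 0"
  shows "(S z, T z) \<in> punctured_quadrant"
proof -
  have "S z \<noteq> 0 \<or> T z \<noteq> 0"
    using assms comp1_eq_0_and_comp2_eq_0_iff alpha1_sq_eq_0_iff alpha2_sq_eq_0_iff by blast
  then show ?thesis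
    using alpha1_sq_nonneg alpha2_sq_nonneg by (simp add: mem_punctured_quadrant_iff)
qed

lemma alpha_sq_mem_U: "z \<noteq> 0 \<Longrightarrow> (S z, T z) \<in> U"
  using alpha_sq_mem_punctured_quadrant punctured_quadrant_subset by blast

lemma alpha_sq_cases:
  assumes "y \<noteq> 0"
  obtains "S y = 0" "0 < T y" | "0 < S y" "T y = 0" | "0 < S y" "0 < T y"
  using alpha_sq_mem_punctured_quadrant[OF assms] by (force simp: mem_punctured_quadrant_iff)

lemma alpha_sq_vec_inl_add_vec_inr:
  "S (vec_inl x + vec_inr w) = x \<bullet> (A *v x)" "T (vec_inl x + vec_inr w) = w \<bullet> (B *v w)"
  by (simp_all add: alpha1_sq_def alpha2_sq_def)

lemma alpha_sq_rescale:
  "S (vec_inl (c *\<^sub>R comp1 y) + vec_inr (d *\<^sub>R comp2 y)) = c^2 * S y"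
  "T (vec_inl (c *\<^sub>R comp1 y) + vec_inr (d *\<^sub>R comp2 y)) = d^2 * T y"
  by (simp_all add: alpha_sq_vec_inl_add_vec_inr matrix_vector_mult_scaleR alpha1_sq_def alpha2_sq_def
      power2_eq_square)

lemma alpha1_sq_attains:
  assumes "0 < S y" "0 < u"
  obtains y' where "y' \<noteq> 0" "S y' = u" "T y' = T y"
proof
  let ?y' = "vec_inl (sqrt (u / S y) *\<^sub>R comp1 y) + vec_inr (1 *\<^sub>R comp2 y)"
  show "S ?y' = u" "T ?y' = T y"
    using assms by (simp_all only: alpha_sq_rescale) simp_all
  then show "?y' \<noteq> 0"
    using assms(2) alpha1_sq_pos_imp_comp1_nonzero by force
qed

lemma alpha2_sq_attains:
  assumes "0 < T y" "0 < u"
  obtains y' where "y' \<noteq> 0" "S y' = S y" "T y' = u"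
proof
  let ?y' = "vec_inl (1 *\<^sub>R comp1 y) + vec_inr (sqrt (u / T y) *\<^sub>R comp2 y)"
  show "S ?y' = S y" "T ?y' = u"
    using assms by (simp_all only: alpha_sq_rescale) simp_all
  then show "?y' \<noteq> 0"
    using assms(2) alpha2_sq_pos_imp_comp2_nonzero by force
qed

lemma Fprod_sq: "(Fprod A B f z)^2 = f (S z) (T z)"
  using nonneg alpha1_sq_nonneg alpha2_sq_nonneg by (simp add: Fprod_def)

lemma has_derivative_alpha1_sq: "(S has_derivative (\<lambda>h. 2 * ((A *v comp1 z) \<bullet> comp1 h))) (at z)"
  unfolding alpha1_sq_def[abs_def] by (rule has_derivative_quadratic_form[OF sym_A linear_comp1])

lemma has_derivative_alpha2_sq: "(T has_derivative (\<lambda>h. 2 * ((B *v comp2 z) \<bullet> comp2 h))) (at z)"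
  unfolding alpha2_sq_def[abs_def] by (rule has_derivative_quadratic_form[OF sym_B linear_comp2])

lemma has_derivative_partial_compose_alpha_sq:
  assumes "Ck_on2 (Suc 0) U g" "z \<noteq> 0"
  shows "((\<lambda>z. g (S z) (T z)) has_derivative (\<lambda>h. pd_s g (S z) (T z) * (2 * ((A *v comp1 z) \<bullet> comp1 h))
           + pd_t g (S z) (T z) * (2 * ((B *v comp2 z) \<bullet> comp2 h)))) (at z)"
  by (rule has_derivative_Ck_on2_compose[OF open_U assms(1) alpha_sq_mem_U[OF assms(2)]
        has_derivative_alpha1_sq has_derivative_alpha2_sq])

text \<open>\<open>dF2 j z\<close> is \<open>\<partial>F\<^sup>2/\<partial>y\<^sup>j\<close> at \<open>z\<close>, and \<open>ddF2 j y h\<close> the derivative of \<open>dF2 j\<close> at \<open>y\<close>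
  in direction \<open>h\<close>.\<close>
definition dF2 :: "'n1 + 'n2 \<Rightarrow> real^('n1 + 'n2) \<Rightarrow> real" where
  "dF2 j z = pd_s f (S z) (T z) * (2 * ((A *v comp1 z) \<bullet> comp1 (axis j 1 :: real^('n1 + 'n2))))
           + pd_t f (S z) (T z) * (2 * ((B *v comp2 z) \<bullet> comp2 (axis j 1 :: real^('n1 + 'n2))))"

definition ddF2 :: "'n1 + 'n2 \<Rightarrow> real^('n1 + 'n2) \<Rightarrow> real^('n1 + 'n2) \<Rightarrow> real" where
  "ddF2 j y h =
     (pd_s f (S y) (T y) * (2 * ((A *v comp1 h) \<bullet> comp1 (axis j 1 :: real^('n1 + 'n2))))
       + (pd_s (pd_s f) (S y) (T y) * (2 * ((A *v comp1 y) \<bullet> comp1 h))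
          + pd_t (pd_s f) (S y) (T y) * (2 * ((B *v comp2 y) \<bullet> comp2 h)))
         * (2 * ((A *v comp1 y) \<bullet> comp1 (axis j 1 :: real^('n1 + 'n2)))))
   + (pd_t f (S y) (T y) * (2 * ((B *v comp2 h) \<bullet> comp2 (axis j 1 :: real^('n1 + 'n2))))
       + (pd_s (pd_t f) (S y) (T y) * (2 * ((A *v comp1 y) \<bullet> comp1 h))
          + pd_t (pd_t f) (S y) (T y) * (2 * ((B *v comp2 y) \<bullet> comp2 h)))
         * (2 * ((B *v comp2 y) \<bullet> comp2 (axis j 1 :: real^('n1 + 'n2)))))"

lemma pdy_F2: "z \<noteq> 0 \<Longrightarrow> pdy j (\<lambda>z. (Fprod A B f z)^2) z = dF2 j z"
  unfolding Fprod_sq dF2_def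
  by (rule pdy_eq_derivative[OF has_derivative_partial_compose_alpha_sq[OF C1_f]])

lemma has_derivative_dF2: "y \<noteq> 0 \<Longrightarrow> (dF2 j has_derivative ddF2 j y) (at y)"
  unfolding dF2_def ddF2_def[abs_def]
  by (rule has_derivative_add[OF
        has_derivative_mult[OF has_derivative_partial_compose_alpha_sq[OF C1_pd_s]
          has_derivative_mult_right[OF has_derivative_matrix_inner_linear[OF linear_comp1]]]
        has_derivative_mult[OF has_derivative_partial_compose_alpha_sq[OF C1_pd_t]
          has_derivative_mult_right[OF has_derivative_matrix_inner_linear[OF linear_comp2]]]])

lemma pdy_pdy_F2:
  assumes "y \<noteq> 0"
  shows "pdy i (pdy j (\<lambda>z. (Fprod A B f z)^2)) y = ddF2 j y (axis i 1)"
proof -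
  have "((\<lambda>r. dF2 j (y + r *\<^sub>R axis i 1)) has_real_derivative ddF2 j y (axis i 1)) (at 0)"
    by (rule has_real_derivative_along_line[OF has_derivative_dF2[OF assms]])
  then have "((\<lambda>r. pdy j (\<lambda>z. (Fprod A B f z)^2) (y + r *\<^sub>R axis i 1)) has_real_derivative ddF2 j y (axis i 1)) (at 0)"
  proof (rule has_field_derivative_transform_within_open[of _ _ _ "ball 0 (norm y)"])
    fix r :: real assume r: "r \<in> ball 0 (norm y)"
    have "y + r *\<^sub>R axis i 1 \<noteq> 0"
    proof
      assume "y + r *\<^sub>R axis i 1 = 0"
      then have "y = - (r *\<^sub>R axis i 1)"
        by (simp add: eq_neg_iff_add_eq_0)
      then have "norm y = \<bar>r\<bar>"
        by simp
      then show False using r by simp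
    qed
    then show "dF2 j (y + r *\<^sub>R axis i 1) = pdy j (\<lambda>z. (Fprod A B f z)^2) (y + r *\<^sub>R axis i 1)"
      by (simp add: pdy_F2)
  qed (use assms in auto)
  then show ?thesis
    unfolding pdy_def[of i] by (rule DERIV_imp_deriv)
qed

lemma gmat_eq:
  assumes "y \<noteq> 0"
  shows "gmat A B f y = block_diag (f_s y *\<^sub>R A) (f_t y *\<^sub>R B)
    + (2 * f_ss y) *\<^sub>R outer_prod (lower1 y) (lower1 y)
    + (2 * f_st y) *\<^sub>R (outer_prod (lower1 y) (lower2 y) + outer_prod (lower2 y) (lower1 y))
    + (2 * f_tt y) *\<^sub>R outer_prod (lower2 y) (lower2 y)"
  (is "_ = ?R")
proof -
  have sym: "pd_s (pd_t f) (S y) (T y) = f_st y"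
    by (rule pd_mixed_symmetric[OF alpha_sq_mem_punctured_quadrant[OF assms]])
  have "gmat A B f y $ i $ j = ?R $ i $ j" for i j
    by (cases i; cases j)
      (simp_all add: gmat_def pdy_pdy_F2[OF assms] ddF2_def block_diag_def outer_prod_def inner_axis
        matrix_vector_mult_axis_nth sym symmetric_matrix_nth[OF sym_A] symmetric_matrix_nth[OF sym_B]
        algebra_simps)
  then show ?thesis by (simp add: vec_eq_iff)
qed

lemma gmat_quadratic_form:
  assumes "y \<noteq> 0"
  shows "v \<bullet> (gmat A B f y *v v) = f_s y * S v + f_t y * T v
     + 2 * f_ss y * ((A *v comp1 y) \<bullet> comp1 v)^2
     + 4 * f_st y * ((A *v comp1 y) \<bullet> comp1 v) * ((B *v comp2 y) \<bullet> comp2 v)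
     + 2 * f_tt y * ((B *v comp2 y) \<bullet> comp2 v)^2"
  unfolding gmat_eq[OF assms]
  by (simp add: scaleR_matrix_vector_assoc[symmetric] outer_prod_mult_vec block_diag_mult_vec
      alpha1_sq_def alpha2_sq_def inner_commute[of "comp1 v"] inner_commute[of "comp2 v"]
      power2_eq_square algebra_simps)

lemma gmat_quadratic_form_span:
  fixes \<alpha> \<beta> :: real
  assumes "y \<noteq> 0"
  defines "v \<equiv> vec_inl (\<alpha> *\<^sub>R comp1 y) + vec_inr (\<beta> *\<^sub>R comp2 y)"
  shows "v \<bullet> (gmat A B f y *v v) =
     S y * (f_s y + 2 * S y * f_ss y) * \<alpha>^2 + 2 * (2 * S y * T y * f_st y) * \<alpha> * \<beta>
     + T y * (f_t y + 2 * T y * f_tt y) * \<beta>^2"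
proof -
  have "(A *v comp1 y) \<bullet> comp1 y = S y" "(B *v comp2 y) \<bullet> comp2 y = T y"
    by (simp_all add: alpha1_sq_def alpha2_sq_def inner_commute)
  then show ?thesis
    unfolding gmat_quadratic_form[OF assms(1)] v_def
    by (simp add: alpha_sq_rescale matrix_vector_mult_scaleR power2_eq_square algebra_simps)
qed

lemma det_gmat:
  assumes "y \<noteq> 0" "finsler_conditions f (S y) (T y)"
  shows "det (gmat A B f y) =
    (f_s y ^ (CARD('n1) - 1) * f_t y ^ (CARD('n2) - 1) * (f_s y * f_t y - 2 * f (S y) (T y) * f_st y))
    * det A * det B"
proof -
  have "det (gmat A B f y) = f_s y ^ (CARD('n1) - 1) * f_t y ^ (CARD('n2) - 1)
      * ((f_s y + 2 * f_ss y * S y) * (f_t y + 2 * f_tt y * T y) - (2 * f_st y)^2 * S y * T y) * det A * det B"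
    unfolding gmat_eq[OF assms(1)] alpha1_sq_def alpha2_sq_def
    using assms(2) by (intro det_block_diag_add_rank2)
      (auto simp: finsler_conditions_def alpha1_sq_def alpha2_sq_def mult_ac)
  also have "(f_s y + 2 * f_ss y * S y) * (f_t y + 2 * f_tt y * T y) - (2 * f_st y)^2 * S y * T y
      = f_s y * f_t y - 2 * f (S y) (T y) * f_st y"
    using hessian_discriminant_eq[OF alpha_sq_mem_punctured_quadrant[OF assms(1)]]
    by (simp add: power2_eq_square algebra_simps)
  finally show ?thesis by simp
qed

lemma pos_def_gmat_span:
  assumes "y \<noteq> 0" "pos_def (gmat A B f y)" "\<alpha> *\<^sub>R comp1 y \<noteq> 0 \<or> \<beta> *\<^sub>R comp2 y \<noteq> 0"
  shows "0 < S y * (f_s y + 2 * S y * f_ss y) * \<alpha>^2 + 2 * (2 * S y * T y * f_st y) * \<alpha> * \<beta>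
     + T y * (f_t y + 2 * T y * f_tt y) * \<beta>^2"
proof -
  let ?v = "vec_inl (\<alpha> *\<^sub>R comp1 y) + vec_inr (\<beta> *\<^sub>R comp2 y)"
  have "?v \<noteq> 0"
    using assms(3) by (simp add: vec_inl_add_vec_inr_eq_0_iff)
  then have "0 < ?v \<bullet> (gmat A B f y *v ?v)"
    using assms(2) unfolding pos_def_def by blast
  then show ?thesis
    unfolding gmat_quadratic_form_span[OF assms(1)] .
qed

lemma pos_def_gmat_imp_s_condition:
  assumes "y \<noteq> 0" "pos_def (gmat A B f y)" "0 < S y"
  shows "0 < f_s y + 2 * S y * f_ss y"
  using pos_def_gmat_span[OF assms(1,2), of 1 0] assms(3) alpha1_sq_pos_imp_comp1_nonzero[OF assms(3)]
  by (simp add: zero_less_mult_iff)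

lemma pos_def_gmat_imp_t_condition:
  assumes "y \<noteq> 0" "pos_def (gmat A B f y)" "0 < T y"
  shows "0 < f_t y + 2 * T y * f_tt y"
  using pos_def_gmat_span[OF assms(1,2), of 0 1] assms(3) alpha2_sq_pos_imp_comp2_nonzero[OF assms(3)]
  by (simp add: zero_less_mult_iff)

text \<open>The form of \<open>gmat_quadratic_form_span\<close> at \<open>(\<alpha>, \<beta>) = (-Z, X)\<close> is \<open>X (X Y - Z\<^sup>2)\<close>.\<close>
lemma pos_def_gmat_imp_discriminant:
  assumes "y \<noteq> 0" "pos_def (gmat A B f y)" "0 < S y" "0 < T y"
  shows "0 < f_s y * f_t y - 2 * f (S y) (T y) * f_st y"
proof -
  define X where "X = S y * (f_s y + 2 * S y * f_ss y)"
  define Y where "Y = T y * (f_t y + 2 * T y * f_tt y)"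
  define Z where "Z = 2 * S y * T y * f_st y"
  have "0 < X"
    using pos_def_gmat_imp_s_condition[OF assms(1-3)] assms(3) by (simp add: X_def)
  moreover have "X *\<^sub>R comp2 y \<noteq> 0"
    using \<open>0 < X\<close> alpha2_sq_pos_imp_comp2_nonzero[OF assms(4)] by simp
  ultimately have "0 < S y * (f_s y + 2 * S y * f_ss y) * (- Z)^2 + 2 * (2 * S y * T y * f_st y) * (- Z) * X
      + T y * (f_t y + 2 * T y * f_tt y) * X^2"
    using pos_def_gmat_span[OF assms(1,2), of "- Z" X] by simp
  also have "\<dots> = X * (X * Y - Z^2)"
    unfolding X_def[symmetric] Y_def[symmetric] Z_def[symmetric] by (simp add: power2_eq_square algebra_simps)
  finally have "0 < X * (X * Y - Z^2)" .
  then have "0 < X * Y - Z^2"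
    using \<open>0 < X\<close> by (simp add: zero_less_mult_iff)
  also have "X * Y - Z^2 = S y * T y
      * ((f_s y + 2 * S y * f_ss y) * (f_t y + 2 * T y * f_tt y) - 4 * S y * T y * (f_st y)^2)"
    by (simp add: X_def Y_def Z_def power2_eq_square algebra_simps)
  also have "\<dots> = S y * T y * (f_s y * f_t y - 2 * f (S y) (T y) * f_st y)"
    using hessian_discriminant_eq[OF alpha_sq_mem_punctured_quadrant[OF assms(1)]] by simp
  finally show ?thesis
    using assms(3,4) by (metis mult_pos_pos zero_less_mult_pos)
qed

lemma pos_def_gmat_imp_pd_s_pos_boundary:
  assumes "y \<noteq> 0" "pos_def (gmat A B f y)" "S y = 0"
  shows "0 < f_s y"
proof -
  define e :: "real^'n1" where "e = axis undefined 1"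
  have "e \<noteq> 0" by (simp add: e_def)
  then have "0 < vec_inl e \<bullet> (gmat A B f y *v vec_inl e)"
    using assms(2) by (metis pos_def_def vec_inl_eq_0_iff)
  also have "\<dots> = f_s y * (e \<bullet> (A *v e))"
    unfolding gmat_quadratic_form[OF assms(1)] using assms(3) alpha1_sq_eq_0_iff
    by (simp add: alpha1_sq_def alpha2_sq_def)
  moreover have "0 < e \<bullet> (A *v e)"
    using pos_def_A \<open>e \<noteq> 0\<close> by (simp add: pos_def_def)
  ultimately show ?thesis
    by (simp add: zero_less_mult_iff)
qed

lemma pos_def_gmat_imp_pd_t_pos_boundary:
  assumes "y \<noteq> 0" "pos_def (gmat A B f y)" "T y = 0"
  shows "0 < f_t y"
proof -
  define e :: "real^'n2" where "e = axis undefined 1"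
  have "e \<noteq> 0" by (simp add: e_def)
  then have "0 < vec_inr e \<bullet> (gmat A B f y *v vec_inr e)"
    using assms(2) by (metis pos_def_def vec_inr_eq_0_iff)
  also have "\<dots> = f_t y * (e \<bullet> (B *v e))"
    unfolding gmat_quadratic_form[OF assms(1)] using assms(3) alpha2_sq_eq_0_iff
    by (simp add: alpha1_sq_def alpha2_sq_def)
  moreover have "0 < e \<bullet> (B *v e)"
    using pos_def_B \<open>e \<noteq> 0\<close> by (simp add: pos_def_def)
  ultimately show ?thesis
    by (simp add: zero_less_mult_iff)
qed

text \<open>In the interior only \<open>f\<^sub>s + 2 s f\<^sub>s\<^sub>s > 0\<close> is visible directly; since every point of
  the segment \<open>u \<mapsto> (u, t)\<close>, \<open>0 < u \<le> s\<close>, is a value of \<open>(\<alpha>\<^sub>1\<^sup>2, \<alpha>\<^sub>2\<^sup>2)\<close>, it can be integrated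
  by \<open>sqrt_weighted_DERIV_pos_imp_pos\<close>.\<close>
lemma pos_def_gmat_imp_pd_s_pos:
  assumes pd: "\<forall>z. z \<noteq> 0 \<longrightarrow> pos_def (gmat A B f z)" and "y \<noteq> 0"
  shows "0 < f_s y"
  using \<open>y \<noteq> 0\<close>
proof (cases rule: alpha_sq_cases)
  case 1
  then show ?thesis using pd assms(2) pos_def_gmat_imp_pd_s_pos_boundary by blast
next
  case 2
  then show ?thesis
    using pos_def_gmat_imp_s_condition[OF assms(2)] pd assms(2) pd_s_pd_s_eq_0_on_s_axis by simp
next
  case 3
  show ?thesis
  proof (rule sqrt_weighted_DERIV_pos_imp_pos[OF \<open>0 < S y\<close>])
    have "continuous_on {0..S y} ((\<lambda>p. pd_s f (fst p) (snd p)) \<circ> (\<lambda>u. (u, T y)))"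
      using 3 by (intro continuous_on_compose continuous_intros continuous_on_subset[OF continuous_on_partials(1)])
        (auto intro: mem_U)
    then show "continuous_on {0..S y} (\<lambda>u. pd_s f u (T y))"
      by (simp add: o_def)
  next
    fix u assume u: "0 < u" "u < S y"
    show "((\<lambda>u. pd_s f u (T y)) has_real_derivative pd_s (pd_s f) u (T y)) (at u)"
      using u 3 by (intro has_real_derivative_pd_s[OF C1_pd_s] mem_U) auto
    obtain y' where "y' \<noteq> 0" "S y' = u" "T y' = T y"
      using alpha1_sq_attains[OF \<open>0 < S y\<close> u(1)] .
    then show "0 < pd_s f u (T y) + 2 * u * pd_s (pd_s f) u (T y)"
      using pos_def_gmat_imp_s_condition[of y'] pd u by auto
  qed
qed

lemma pos_def_gmat_imp_pd_t_pos:
  assumes pd: "\<forall>z. z \<noteq> 0 \<longrightarrow> pos_def (gmat A B f z)" and "y \<noteq> 0"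
  shows "0 < f_t y"
  using \<open>y \<noteq> 0\<close>
proof (cases rule: alpha_sq_cases)
  case 1
  then show ?thesis
    using pos_def_gmat_imp_t_condition[OF assms(2)] pd assms(2) pd_t_pd_t_eq_0_on_t_axis by simp
next
  case 2
  then show ?thesis using pd assms(2) pos_def_gmat_imp_pd_t_pos_boundary by blast
next
  case 3
  show ?thesis
  proof (rule sqrt_weighted_DERIV_pos_imp_pos[OF \<open>0 < T y\<close>])
    have "continuous_on {0..T y} ((\<lambda>p. pd_t f (fst p) (snd p)) \<circ> (\<lambda>u. (S y, u)))"
      using 3 by (intro continuous_on_compose continuous_intros continuous_on_subset[OF continuous_on_partials(2)])
        (auto intro: mem_U)
    then show "continuous_on {0..T y} (\<lambda>u. pd_t f (S y) u)"
      by (simp add: o_def)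
  next
    fix u assume u: "0 < u" "u < T y"
    show "((\<lambda>u. pd_t f (S y) u) has_real_derivative pd_t (pd_t f) (S y) u) (at u)"
      using u 3 by (intro has_real_derivative_pd_t[OF C1_pd_t] mem_U) auto
    obtain y' where "y' \<noteq> 0" "S y' = S y" "T y' = u"
      using alpha2_sq_attains[OF \<open>0 < T y\<close> u(1)] .
    then show "0 < pd_t f (S y) u + 2 * u * pd_t (pd_t f) (S y) u"
      using pos_def_gmat_imp_t_condition[of y'] pd u by auto
  qed
qed

lemma pos_def_gmat_imp_finsler_conditions:
  assumes pd: "\<forall>z. z \<noteq> 0 \<longrightarrow> pos_def (gmat A B f z)" and "y \<noteq> 0"
  shows "finsler_conditions f (S y) (T y)"
proof -
  have pd_y: "pos_def (gmat A B f y)"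
    using pd assms(2) by blast
  have pos: "0 < f_s y" "0 < f_t y"
    using pos_def_gmat_imp_pd_s_pos[OF pd assms(2)] pos_def_gmat_imp_pd_t_pos[OF pd assms(2)] .
  have quadrant: "(S y, T y) \<in> punctured_quadrant"
    using alpha_sq_mem_punctured_quadrant[OF assms(2)] .
  from \<open>y \<noteq> 0\<close> have "0 < f_s y + 2 * S y * f_ss y \<and> 0 < f_t y + 2 * T y * f_tt y
      \<and> 0 < f_s y * f_t y - 2 * f (S y) (T y) * f_st y"
  proof (cases rule: alpha_sq_cases)
    case 1
    then have "f_st y = 0" "f_tt y = 0"
      using pd_t_pd_s_eq_0_on_axes[OF quadrant] pd_t_pd_t_eq_0_on_t_axis by auto
    then show ?thesis using 1 pos by simp
  next
    case 2
    then have "f_st y = 0" "f_ss y = 0"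
      using pd_t_pd_s_eq_0_on_axes[OF quadrant] pd_s_pd_s_eq_0_on_s_axis by auto
    then show ?thesis using 2 pos by simp
  next
    case 3
    then show ?thesis
      using pos_def_gmat_imp_s_condition pos_def_gmat_imp_t_condition pos_def_gmat_imp_discriminant
        assms(2) pd_y by blast
  qed
  then show ?thesis
    using pos unfolding finsler_conditions_def by blast
qed

lemma alpha_sq_Cauchy_Schwarz:
  "((A *v comp1 y) \<bullet> comp1 v)^2 \<le> S y * S v" "((B *v comp2 y) \<bullet> comp2 v)^2 \<le> T y * T v"
  using pos_def_Cauchy_Schwarz[OF sym_A pos_def_A, of "comp1 y" "comp1 v"]
    pos_def_Cauchy_Schwarz[OF sym_B pos_def_B, of "comp2 y" "comp2 v"]
  by (simp_all add: alpha1_sq_def alpha2_sq_def)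

lemma finsler_conditions_imp_pos_def_gmat:
  assumes "y \<noteq> 0" and cond: "finsler_conditions f (S y) (T y)"
  shows "pos_def (gmat A B f y)"
  unfolding pos_def_def
proof (intro allI impI)
  fix v :: "real^('n1 + 'n2)" assume "v \<noteq> 0"
  define p where "p = (A *v comp1 y) \<bullet> comp1 v"
  define q where "q = (B *v comp2 y) \<bullet> comp2 v"
  have quadrant: "(S y, T y) \<in> punctured_quadrant"
    using alpha_sq_mem_punctured_quadrant[OF assms(1)] .
  have "0 < S v \<or> 0 < T v"
    using alpha_sq_cases[OF \<open>v \<noteq> 0\<close>] by auto
  then have base: "0 < f_s y * S v + f_t y * T v"
    using cond alpha1_sq_nonneg[of v] alpha2_sq_nonneg[of v]
    by (auto simp: finsler_conditions_def intro: add_pos_nonneg add_nonneg_pos)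
  have Q: "v \<bullet> (gmat A B f y *v v)
      = f_s y * S v + f_t y * T v + 2 * f_ss y * p^2 + 4 * f_st y * p * q + 2 * f_tt y * q^2"
    unfolding gmat_quadratic_form[OF assms(1)] p_def q_def ..
  from \<open>y \<noteq> 0\<close> show "0 < v \<bullet> (gmat A B f y *v v)"
  proof (cases rule: alpha_sq_cases)
    case 1
    then have "f_st y = 0" "f_tt y = 0"
      using pd_t_pd_s_eq_0_on_axes[OF quadrant] pd_t_pd_t_eq_0_on_t_axis by auto
    moreover have "p = 0"
      using 1 alpha1_sq_eq_0_iff by (simp add: p_def)
    ultimately show ?thesis unfolding Q using base by simp
  next
    case 2
    then have "f_st y = 0" "f_ss y = 0"
      using pd_t_pd_s_eq_0_on_axes[OF quadrant] pd_s_pd_s_eq_0_on_s_axis by auto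
    moreover have "q = 0"
      using 2 alpha2_sq_eq_0_iff by (simp add: q_def)
    ultimately show ?thesis unfolding Q using base by simp
  next
    case 3
    then show ?thesis
      unfolding Q using cond hessian_discriminant_eq[OF quadrant] alpha_sq_Cauchy_Schwarz[of y v]
        alpha1_sq_nonneg[of v] alpha2_sq_nonneg[of v] \<open>0 < S v \<or> 0 < T v\<close>
      by (intro tensor_quadratic_form_pos) (simp_all add: finsler_conditions_def p_def q_def)
  qed
qed

end

theorem mainTheorem7:
  fixes A :: "real^'n1^'n1" and B :: "real^'n2^'n2" and f :: "real \<Rightarrow> real \<Rightarrow> real"
  assumes symA: "transpose A = A" and pdA: "pos_def A"
      and symB: "transpose B = B" and pdB: "pos_def B"
      and smooth: "\<exists>U. open U \<and> punctured_quadrant \<subseteq> U \<and> smooth_on2 U f"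
      and nonneg: "\<forall>s t. 0 \<le> s \<longrightarrow> 0 \<le> t \<longrightarrow> 0 \<le> f s t"
      and homog: "\<forall>l s t. 0 < l \<longrightarrow> 0 \<le> s \<longrightarrow> 0 \<le> t \<longrightarrow> f (l * s) (l * t) = l * f s t"
      and nonzero: "\<forall>s t. (s, t) \<in> punctured_quadrant \<longrightarrow> f s t \<noteq> 0"
  shows "((\<forall>y::real^('n1 + 'n2). y \<noteq> 0 \<longrightarrow> pos_def (gmat A B f y)) \<longleftrightarrow>
          (\<forall>y::real^('n1 + 'n2). y \<noteq> 0 \<longrightarrow>
             (let s = alpha1_sq A y; t = alpha2_sq B y in
                pd_s f s t > 0 \<and> pd_t f s t > 0 \<and>
                pd_s f s t + 2 * s * pd_s (pd_s f) s t > 0 \<and>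
                pd_t f s t + 2 * t * pd_t (pd_t f) s t > 0 \<and>
                pd_s f s t * pd_t f s t - 2 * f s t * pd_t (pd_s f) s t > 0)))
       \<and> ((\<forall>y::real^('n1 + 'n2). y \<noteq> 0 \<longrightarrow> pos_def (gmat A B f y)) \<longrightarrow>
          (\<forall>y::real^('n1 + 'n2). y \<noteq> 0 \<longrightarrow>
             (let s = alpha1_sq A y; t = alpha2_sq B y in
                det (gmat A B f y) =
                  (pd_s f s t ^ (CARD('n1) - 1) * pd_t f s t ^ (CARD('n2) - 1) *
                   (pd_s f s t * pd_t f s t - 2 * f s t * pd_t (pd_s f) s t))
                  * det A * det B)))"
proof -
  obtain U where "open U" "punctured_quadrant \<subseteq> U" "smooth_on2 U f"
    using smooth by blast
  then interpret product_finsler f U A B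
    using homog symA pdA symB pdB nonneg by unfold_locales (auto simp: smooth_on2_def)
  have pos_def_iff: "(\<forall>y::real^('n1 + 'n2). y \<noteq> 0 \<longrightarrow> pos_def (gmat A B f y))
      \<longleftrightarrow> (\<forall>y::real^('n1 + 'n2). y \<noteq> 0 \<longrightarrow> finsler_conditions f (S y) (T y))"
    using pos_def_gmat_imp_finsler_conditions finsler_conditions_imp_pos_def_gmat by blast
  show ?thesis
    unfolding Let_def finsler_conditions_def[symmetric] pos_def_iff
    using det_gmat by simp
qed

end
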